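(* For $n\ge 2$ and all integers $k$, $$P^+(n+1,k)=(k+1)P^+(n,k)+(n-2k)P^+(n,k-1)+P^-(n,k),$$ $$P^-(n+1,k)=(k+1)P^-(n,k)+(n-2k+1)P^-(n,k-1)+P^+(n,k-1).$$ Equivalently, $$P_{n+1}^+(x)=((n-2)x+1)P_n^+(x)+x(1-2x)\tfrac{d}{dx}P_n^+(x)+P_n^-(x),$$ $$P_{n+1}^-(x)=((n-1)x+1)P_n^-(x)+x(1-2x)\tfrac{d}{dx}P_n^-(x)+xP_n^+(x).$$
   Context: For a permutation $\pi$ of $[n]=\{1,\dots,n\}$, a double descent is an index $i\in[n-2]$ with $\pi(i)>\pi(i+1)>\pi(i+2)$; $\pi$ is simsun if for every $k\in[n]$ the subword of $\pi$ consisting of the letters in $[k]$ (in order of appearance) has no double descents. Let $\mathcal{RS}_n$ be the set of simsun permutations of $[n]$, $\mathcal{RS}_n^+=\{\pi\in\mathcal{RS}_n:\pi(1)>\pi(2)\}$, $\mathcal{RS}_n^-=\{\pi\in\mathcal{RS}_n:\pi(1)<\pi(2)\}$. An interior peak of $\pi$ is an index $i\in\{2,\dots,n-1\}$ with $\pi(i-1)<\pi(i)>\pi(i+1)$, and ${\rm pk}(\pi)$ is their number. Let $P^{\pm}(n,k)=\#\{\pi\in\mathcal{RS}_n^{\pm}:{\rm pk}(\pi)=k\}$ and $P_n^{\pm}(x)=\sum_k P^{\pm}(n,k)x^k$ (with $P^\pm(n,k)=0$ for $k<0$). *)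

theory Defs
  imports "HOL-Computational_Algebra.Polynomial"
begin

text \<open>A permutation of [n] is represented as the list of its values
  [pi(1), ..., pi(n)]; list position j (0-based) holds pi(j+1).\<close>

definition is_perm :: "nat \<Rightarrow> nat list \<Rightarrow> bool" where
  "is_perm n xs \<longleftrightarrow> distinct xs \<and> set xs = {1..n}"

definition has_double_descent :: "nat list \<Rightarrow> bool" where
  "has_double_descent xs \<longleftrightarrow>
     (\<exists>i. i + 2 < length xs \<and> xs ! i > xs ! (i+1) \<and> xs ! (i+1) > xs ! (i+2))"

definition simsun :: "nat \<Rightarrow> nat list \<Rightarrow> bool" where
  "simsun n xs \<longleftrightarrow> (\<forall>k\<in>{1..n}. \<not> has_double_descent (filter (\<lambda>x. x \<le> k) xs))"

definition RS :: "nat \<Rightarrow> nat list set" where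
  "RS n = {xs. is_perm n xs \<and> simsun n xs}"

definition RS_plus :: "nat \<Rightarrow> nat list set" where
  "RS_plus n = {xs \<in> RS n. xs ! 0 > xs ! 1}"

definition RS_minus :: "nat \<Rightarrow> nat list set" where
  "RS_minus n = {xs \<in> RS n. xs ! 0 < xs ! 1}"

text \<open>Interior peaks: 1-based index i in {2..n-1}, i.e. 0-based j with 1 \<le> j, j+1 < n.\<close>
definition pk :: "nat list \<Rightarrow> nat" where
  "pk xs = card {j. 1 \<le> j \<and> j + 1 < length xs \<and> xs ! (j-1) < xs ! j \<and> xs ! j > xs ! (j+1)}"

definition Pplus :: "nat \<Rightarrow> int \<Rightarrow> int" where
  "Pplus n k = int (card {xs \<in> RS_plus n. int (pk xs) = k})"

definition Pminus :: "nat \<Rightarrow> int \<Rightarrow> int" where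
  "Pminus n k = int (card {xs \<in> RS_minus n. int (pk xs) = k})"

text \<open>Generating polynomials (pk of a permutation of [n] is below n).\<close>
definition Pplus_poly :: "nat \<Rightarrow> int poly" where
  "Pplus_poly n = (\<Sum>k\<le>n. monom (Pplus n (int k)) k)"

definition Pminus_poly :: "nat \<Rightarrow> int poly" where
  "Pminus_poly n = (\<Sum>k\<le>n. monom (Pminus n (int k)) k)"

end

theory Submission
  imports Defs
begin

text \<open>Deleting the letter n+1 from a simsun permutation of [n+1] leaves a simsun permutation of
  [n], and n+1 can be inserted into a simsun permutation of [n] exactly at the positions that are
  not followed by a descent; so every permutation in RS (n+1) arises exactly once in this way.
  For a parent with m peaks these positions are: right after a peak or at the end (m+1 positions;
  the peak number and the first step are unchanged), the front if the parent starts with an ascent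
  (peak number unchanged, the first step becomes a descent), and the remaining n-1-2m interior
  positions, each of which creates one new peak; among them, position 1 also turns an initial
  descent into an ascent. Summing over all parents gives the recurrences, and the polynomial
  identities are their coefficientwise form.\<close>

definition insert_nth :: "nat \<Rightarrow> 'a \<Rightarrow> 'a list \<Rightarrow> 'a list" where
  "insert_nth s x xs = take s xs @ x # drop s xs"

lemma length_insert_nth [simp]:
  "s \<le> length xs \<Longrightarrow> length (insert_nth s x xs) = Suc (length xs)"
  by (simp add: insert_nth_def)

lemma nth_insert_nth:
  "s \<le> length xs \<Longrightarrow> j \<le> length xs \<Longrightarrow>
    insert_nth s x xs ! j = (if j < s then xs ! j else if j = s then x else xs ! (j - 1))"
  by (auto simp: insert_nth_def nth_append nth_Cons' min_def)

lemma set_insert_nth [simp]: "set (insert_nth s x xs) = insert x (set xs)"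
  by (metis insert_nth_def Un_insert_right append_take_drop_id set_append list.set(2))

lemma distinct_insert_nth [simp]:
  "distinct (insert_nth s x xs) \<longleftrightarrow> x \<notin> set xs \<and> distinct xs"
proof -
  have "distinct (take s xs @ x # drop s xs) \<longleftrightarrow> distinct (x # (take s xs @ drop s xs))"
    by (simp only: distinct_append distinct.simps set_append list.set) blast
  then show ?thesis
    by (simp add: insert_nth_def)
qed

lemma filter_insert_nth: "\<not> P x \<Longrightarrow> filter P (insert_nth s x xs) = filter P xs"
  by (metis insert_nth_def append_take_drop_id filter.simps(2) filter_append)

lemma takeWhile_insert_nth:
  "s \<le> length xs \<Longrightarrow> x \<notin> set xs \<Longrightarrow> takeWhile (\<lambda>y. y \<noteq> x) (insert_nth s x xs) = take s xs"
  unfolding insert_nth_def by (subst takeWhile_append2) (auto dest: in_set_takeD)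

lemma insert_nth_inject:
  assumes "s \<le> length xs" "s' \<le> length xs'" "x \<notin> set xs" "x \<notin> set xs'"
    and "insert_nth s x xs = insert_nth s' x xs'"
  shows "xs = xs' \<and> s = s'"
proof -
  have "filter (\<lambda>y. y \<noteq> x) (insert_nth t x zs) = zs" if "x \<notin> set zs" for t zs
    using that by (auto simp: filter_insert_nth filter_id_conv)
  then have "xs = xs'"
    using assms by metis
  moreover have "s = s'"
    using assms takeWhile_insert_nth by (metis length_take min.absorb2)
  ultimately show ?thesis ..
qed

lemma in_set_imp_insert_nth:
  assumes "x \<in> set ys" "distinct ys"
  obtains xs s where "s \<le> length xs" "x \<notin> set xs" "ys = insert_nth s x xs"
proof -
  obtain as bs where ys: "ys = as @ x # bs"
    using assms(1) by (meson split_list)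
  show thesis
    by (rule that[of "length as" "as @ bs"]) (use assms(2) ys in \<open>auto simp: insert_nth_def\<close>)
qed


definition peaks :: "nat list \<Rightarrow> nat set" where
  "peaks xs = {j. 1 \<le> j \<and> j + 1 < length xs \<and> xs ! (j - 1) < xs ! j \<and> xs ! j > xs ! (j + 1)}"

lemma pk_eq_card_peaks: "pk xs = card (peaks xs)"
  by (simp add: pk_def peaks_def)

lemma peaks_subset: "peaks xs \<subseteq> {1..<length xs}"
  by (auto simp: peaks_def)

lemma finite_peaks [simp]: "finite (peaks xs)"
  using peaks_subset by (rule finite_subset) simp

lemma pk_le_length: "pk xs \<le> length xs"
  using card_mono[OF _ peaks_subset, of xs] by (simp add: pk_eq_card_peaks)

lemma Suc_peaks_subset: "Suc ` peaks xs \<subseteq> {1..<length xs} - peaks xs"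
  by (auto simp: peaks_def)

definition ascent_slots :: "nat list \<Rightarrow> nat set" where
  "ascent_slots xs = {s. s \<le> length xs \<and> (s + 1 < length xs \<longrightarrow> xs ! s < xs ! (s + 1))}"

definition new_peak_slots :: "nat list \<Rightarrow> nat set" where
  "new_peak_slots xs = {1..<length xs} - peaks xs - Suc ` peaks xs"

lemma finite_ascent_slots [simp]: "finite (ascent_slots xs)"
  by (rule finite_subset[of _ "{..length xs}"]) (auto simp: ascent_slots_def)

lemma ascent_slot_not_peak: "s \<in> ascent_slots xs \<Longrightarrow> s \<notin> peaks xs"
  by (auto simp: ascent_slots_def peaks_def)

lemma card_new_peak_slots:
  assumes "xs \<noteq> []"
  shows "int (card (new_peak_slots xs)) = int (length xs) - 1 - 2 * int (pk xs)"
proof -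
  have "card (new_peak_slots xs) = card ({1..<length xs} - peaks xs) - card (Suc ` peaks xs)"
    unfolding new_peak_slots_def using Suc_peaks_subset by (intro card_Diff_subset) auto
  moreover have "card ({1..<length xs} - peaks xs) = length xs - 1 - pk xs"
    using peaks_subset by (simp add: card_Diff_subset pk_eq_card_peaks)
  moreover have "card (Suc ` peaks xs) = pk xs"
    by (simp add: card_image pk_eq_card_peaks)
  moreover have "card (Suc ` peaks xs) \<le> card ({1..<length xs} - peaks xs)"
    using Suc_peaks_subset by (rule card_mono[rotated]) simp
  moreover have "0 < length xs"
    using assms by simp
  ultimately show ?thesis
    by linarith
qed

lemma has_double_descent_insert_nth_iff:
  assumes bound: "\<forall>x\<in>set xs. x < N" and s: "s \<le> length xs"
    and nd: "\<not> has_double_descent xs"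
  shows "has_double_descent (insert_nth s N xs) \<longleftrightarrow> s + 1 < length xs \<and> xs ! s > xs ! (s + 1)"
proof -
  let ?ys = "insert_nth s N xs"
  have lt: "\<And>j. j < length xs \<Longrightarrow> xs ! j < N"
    using bound by auto
  show ?thesis
  proof
    assume "has_double_descent ?ys"
    then obtain i where i: "i + 2 < Suc (length xs)"
        "?ys ! i > ?ys ! (i + 1)" "?ys ! (i + 1) > ?ys ! (i + 2)"
      unfolding has_double_descent_def using s by auto
    have ys_nth: "?ys ! i = (if i < s then xs ! i else if i = s then N else xs ! (i - 1))"
        "?ys ! (i + 1) = (if i + 1 < s then xs ! (i + 1) else if i + 1 = s then N else xs ! i)"
        "?ys ! (i + 2) =
          (if i + 2 < s then xs ! (i + 2) else if i + 2 = s then N else xs ! (i + 1))"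
      using i(1) s by (auto simp: nth_insert_nth)
    \<comment> \<open>windows avoiding position s are windows of xs, and N, exceeding every letter,
      can only start a double descent\<close>
    consider "i + 2 < s" | "i + 2 = s" | "i + 1 = s" | "i = s" | "i > s"
      by linarith
    then show "s + 1 < length xs \<and> xs ! s > xs ! (s + 1)"
    proof cases
      case 1
      then have "has_double_descent xs"
        using i ys_nth s unfolding has_double_descent_def by (intro exI[of _ i]) auto
      with nd show ?thesis ..
    next
      case 2
      then show ?thesis using i ys_nth lt[of "i + 1"] by auto
    next
      case 3
      then show ?thesis using i ys_nth lt[of i] by auto
    next
      case 4
      then show ?thesis using i ys_nth by auto
    next
      case 5
      then have "has_double_descent xs"
        using i ys_nth unfolding has_double_descent_def by (intro exI[of _ "i - 1"]) auto
      with nd show ?thesis ..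
    qed
  next
    assume "s + 1 < length xs \<and> xs ! s > xs ! (s + 1)"
    then have "s + 2 < length ?ys \<and> ?ys ! s > ?ys ! (s + 1) \<and> ?ys ! (s + 1) > ?ys ! (s + 2)"
      using s lt by (auto simp: nth_insert_nth)
    then show "has_double_descent ?ys"
      unfolding has_double_descent_def by blast
  qed
qed

lemma not_has_double_descent_insert_nth_iff:
  assumes "\<forall>x\<in>set xs. x < N" "distinct xs" "s \<le> length xs" "\<not> has_double_descent xs"
  shows "\<not> has_double_descent (insert_nth s N xs) \<longleftrightarrow> s \<in> ascent_slots xs"
proof -
  have "s + 1 < length xs \<Longrightarrow> xs ! s \<noteq> xs ! (s + 1)"
    using assms(2) by (simp add: nth_eq_iff_index_eq)
  then show ?thesis
    using assms has_double_descent_insert_nth_iff[of xs N s] by (auto simp: ascent_slots_def)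
qed

lemma peaks_insert_nth:
  assumes bound: "\<forall>x\<in>set xs. x < N" and s: "s \<in> ascent_slots xs"
  shows "peaks (insert_nth s N xs) =
    {j \<in> peaks xs. j + 1 < s} \<union> Suc ` {j \<in> peaks xs. s < j} \<union> {s} \<inter> {1..<length xs}"
proof (rule set_eqI)
  fix j
  let ?ys = "insert_nth s N xs"
  have s_le: "s \<le> length xs"
    using s by (simp add: ascent_slots_def)
  have lt: "\<And>i. i < length xs \<Longrightarrow> xs ! i < N"
    using bound by auto
  have Suc_image: "j \<in> Suc ` {j \<in> peaks xs. s < j} \<longleftrightarrow> s + 1 < j \<and> j - 1 \<in> peaks xs"
    by (cases j) auto
  have "j \<in> peaks ?ys \<longleftrightarrow>
      j + 1 < s \<and> j \<in> peaks xs \<or> s + 1 < j \<and> j - 1 \<in> peaks xs \<or> j = s \<and> 1 \<le> s \<and> s < length xs"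
  proof (cases "j + 1 \<le> length xs")
    case False
    then show ?thesis
      using s_le by (auto simp: peaks_def)
  next
    case True
    have ys_nth:
        "?ys ! (j - 1) = (if j - 1 < s then xs ! (j - 1) else if j - 1 = s then N else xs ! (j - 1 - 1))"
        "?ys ! j = (if j < s then xs ! j else if j = s then N else xs ! (j - 1))"
        "?ys ! (j + 1) = (if j + 1 < s then xs ! (j + 1) else if j + 1 = s then N else xs ! j)"
      using True s_le by (auto simp: nth_insert_nth)
    consider "j + 1 < s" | "j + 1 = s" | "j = s" | "j = s + 1" | "j > s + 1"
      by linarith
    then show ?thesis
    proof cases
      case 1
      then show ?thesis using ys_nth True s_le by (auto simp: peaks_def)
    next
      case 2
      then show ?thesis using ys_nth True s_le lt[of j] by (auto simp: peaks_def)
    next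
      case 3
      then show ?thesis using ys_nth True s_le lt[of "j - 1"] lt[of j] s
        by (auto simp: peaks_def ascent_slots_def)
    next
      case 4
      then show ?thesis using ys_nth True s_le lt[of "j - 1"] lt[of s] s
        by (auto simp: peaks_def ascent_slots_def)
    next
      case 5
      then show ?thesis using ys_nth True s_le by (auto simp: peaks_def)
    qed
  qed
  then show "j \<in> peaks ?ys \<longleftrightarrow>
      j \<in> {j \<in> peaks xs. j + 1 < s} \<union> Suc ` {j \<in> peaks xs. s < j} \<union> {s} \<inter> {1..<length xs}"
    using Suc_image by auto
qed

lemma pk_insert_nth:
  assumes bound: "\<forall>x\<in>set xs. x < N" and s: "s \<in> ascent_slots xs"
  shows "pk (insert_nth s N xs) = pk xs + of_bool (s \<in> new_peak_slots xs)"
proof -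
  define below where "below = {j \<in> peaks xs. j + 1 < s}"
  define above where "above = {j \<in> peaks xs. s < j}"
  define before where "before = {j \<in> peaks xs. j + 1 = s}"
  have fin: "finite below" "finite above" "finite before"
    by (simp_all add: below_def above_def before_def)
  have s_not_peak: "s \<notin> peaks xs"
    using s by (rule ascent_slot_not_peak)
  have "pk (insert_nth s N xs) = card below + card above + of_bool (s \<in> {1..<length xs})"
  proof -
    have "below \<inter> Suc ` above = {}" "(below \<union> Suc ` above) \<inter> ({s} \<inter> {1..<length xs}) = {}"
      by (auto simp: below_def above_def)
    then show ?thesis
      unfolding pk_eq_card_peaks peaks_insert_nth[OF bound s]
        below_def[symmetric] above_def[symmetric]
      using fin by (simp add: card_Un_disjoint card_image)
  qed
  moreover have "pk xs = card below + card above + of_bool (s \<in> Suc ` peaks xs)"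
  proof -
    have "peaks xs = below \<union> above \<union> before"
      using s_not_peak unfolding below_def above_def before_def
      by auto (metis Suc_lessI linorder_neqE_nat)
    then have "card (peaks xs) = card (below \<union> above \<union> before)"
      by simp
    also have "\<dots> = card below + card above + card before"
    proof -
      have "below \<inter> above = {}" "(below \<union> above) \<inter> before = {}"
        by (auto simp: below_def above_def before_def)
      then show ?thesis
        using fin by (simp add: card_Un_disjoint)
    qed
    also have "before = (if s \<in> Suc ` peaks xs then {s - 1} else {})"
      by (auto simp: before_def)
    finally show ?thesis
      by (simp add: pk_eq_card_peaks)
  qed
  moreover have "s \<in> Suc ` peaks xs \<Longrightarrow> s \<in> {1..<length xs}"
    using Suc_peaks_subset by blast
  ultimately show ?thesis
    using s_not_peak by (auto simp: new_peak_slots_def)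
qed

lemma insert_nth_starts_with_descent_iff:
  fixes xs :: "nat list"
  assumes "2 \<le> length xs" "s \<le> length xs" "\<forall>x\<in>set xs. x < N"
  shows "insert_nth s N xs ! 1 < insert_nth s N xs ! 0 \<longleftrightarrow> s = 0 \<or> s \<noteq> 1 \<and> xs ! 1 < xs ! 0"
proof -
  have "xs ! 0 < N" "xs ! 1 < N"
    using assms by (auto intro!: nth_mem)
  then show ?thesis
    using assms by (cases "s = 0 \<or> s = 1") (auto simp: nth_insert_nth)
qed

lemma ascent_slot_iff_not_peak:
  assumes "distinct xs" "\<not> has_double_descent xs" "1 \<le> s" "s < length xs"
  shows "s \<in> ascent_slots xs \<longleftrightarrow> s \<notin> peaks xs"
proof (cases "s + 1 < length xs")
  case True
  have "\<not> (s - 1 + 2 < length xs \<and>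
      xs ! (s - 1) > xs ! (s - 1 + 1) \<and> xs ! (s - 1 + 1) > xs ! (s - 1 + 2))"
    using assms(2) unfolding has_double_descent_def by blast
  moreover have "s - 1 + 1 = s" "s - 1 + 2 = s + 1"
    using assms(3) by auto
  ultimately have "\<not> (xs ! (s - 1) > xs ! s \<and> xs ! s > xs ! (s + 1))"
    using True by simp
  moreover have "xs ! (s - 1) \<noteq> xs ! s" "xs ! s \<noteq> xs ! (s + 1)"
    using assms True by (auto simp: nth_eq_iff_index_eq)
  ultimately show ?thesis
    using assms True by (auto simp: ascent_slots_def peaks_def)
next
  case False
  then show ?thesis
    using assms by (auto simp: ascent_slots_def peaks_def)
qed

lemma ascent_slots_eq:
  assumes "distinct xs" "\<not> has_double_descent xs" "2 \<le> length xs"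
  shows "ascent_slots xs =
    {s. s = 0 \<and> xs ! 0 < xs ! 1} \<union> insert (length xs) (Suc ` peaks xs) \<union> new_peak_slots xs"
proof (rule set_eqI)
  fix s
  have "{1..<length xs} - peaks xs = Suc ` peaks xs \<union> new_peak_slots xs"
    using Suc_peaks_subset by (auto simp: new_peak_slots_def)
  moreover have "0 \<notin> Suc ` peaks xs \<union> new_peak_slots xs" "length xs \<notin> new_peak_slots xs"
    by (auto simp: new_peak_slots_def)
  moreover have "0 \<in> ascent_slots xs \<longleftrightarrow> xs ! 0 < xs ! 1"
    using assms(3) by (simp add: ascent_slots_def)
  ultimately show "s \<in> ascent_slots xs \<longleftrightarrow>
      s \<in> {s. s = 0 \<and> xs ! 0 < xs ! 1} \<union> insert (length xs) (Suc ` peaks xs) \<union> new_peak_slots xs"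
    using ascent_slot_iff_not_peak[OF assms(1,2), of s] Suc_peaks_subset[of xs]
    by (cases "s = 0 \<or> length xs \<le> s") (auto simp: ascent_slots_def new_peak_slots_def)
qed

lemma card_insert_length_Suc_peaks: "card (insert (length xs) (Suc ` peaks xs)) = Suc (pk xs)"
  using Suc_peaks_subset[of xs] by (auto simp: card_insert_if card_image pk_eq_card_peaks)

definition sign_pk :: "nat list \<Rightarrow> bool \<times> int" where
  "sign_pk xs = (xs ! 1 < xs ! 0, int (pk xs))"

lemma sign_pk_insert_nth:
  assumes "2 \<le> length xs" "\<forall>x\<in>set xs. x < N" "s \<in> ascent_slots xs"
  shows "sign_pk (insert_nth s N xs) =
    (s = 0 \<or> s \<noteq> 1 \<and> xs ! 1 < xs ! 0, int (pk xs) + of_bool (s \<in> new_peak_slots xs))"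
  using assms insert_nth_starts_with_descent_iff[of xs s N]
  by (simp add: sign_pk_def pk_insert_nth ascent_slots_def)

lemma sum_of_bool_const_on:
  assumes "\<forall>x\<in>A. f x = c"
  shows "(\<Sum>x\<in>A. of_bool (f x = d)) = of_nat (card A) * (of_bool (c = d) :: 'b::semiring_1)"
  using assms by simp

lemma RS_D:
  assumes "xs \<in> RS n"
  shows "distinct xs" "set xs = {1..n}" "length xs = n" "\<not> has_double_descent xs"
proof -
  show "distinct xs" and set: "set xs = {1..n}"
    using assms by (auto simp: RS_def is_perm_def)
  then show "length xs = n"
    using distinct_card by fastforce
  show "\<not> has_double_descent xs"
  proof (cases "n = 0")
    case True
    then show ?thesis
      using set by (simp add: has_double_descent_def)
  next
    case False
    then have "\<not> has_double_descent (filter (\<lambda>x. x \<le> n) xs)"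
      using assms by (auto simp: RS_def simsun_def)
    moreover have "filter (\<lambda>x. x \<le> n) xs = xs"
      using set by (auto simp: filter_id_conv)
    ultimately show ?thesis
      by simp
  qed
qed

lemma finite_RS [simp]: "finite (RS n)"
proof (rule finite_subset)
  show "RS n \<subseteq> {xs. set xs \<subseteq> {1..n} \<and> length xs = n}"
    by (auto dest: RS_D)
  show "finite {xs. set xs \<subseteq> {1..n} \<and> length xs = n}"
    by (rule finite_lists_length_eq) simp
qed

lemma simsun_Suc_iff:
  assumes "set ys \<subseteq> {..Suc n}"
  shows "simsun (Suc n) ys \<longleftrightarrow> simsun n (filter (\<lambda>x. x \<le> n) ys) \<and> \<not> has_double_descent ys"
proof -
  have "filter (\<lambda>x. x \<le> k) (filter (\<lambda>x. x \<le> n) ys) = filter (\<lambda>x. x \<le> k) ys" if "k \<le> n" for k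
    using that by (auto simp: filter_filter intro: filter_cong)
  moreover have "filter (\<lambda>x. x \<le> Suc n) ys = ys"
    using assms by (auto simp: filter_id_conv)
  moreover have "{1..Suc n} = insert (Suc n) {1..n}"
    by auto
  ultimately show ?thesis
    unfolding simsun_def by auto
qed

lemma insert_nth_in_RS_Suc_iff:
  assumes s: "s \<le> length xs" and fresh: "Suc n \<notin> set xs"
  shows "insert_nth s (Suc n) xs \<in> RS (Suc n) \<longleftrightarrow> xs \<in> RS n \<and> s \<in> ascent_slots xs"
proof -
  let ?ys = "insert_nth s (Suc n) xs"
  have "is_perm (Suc n) ?ys \<longleftrightarrow> is_perm n xs"
    using fresh insert_ident[OF fresh, of "{1..n}"]
    by (auto simp: is_perm_def atLeastAtMostSuc_conv)
  moreover have "simsun (Suc n) ?ys \<longleftrightarrow> simsun n xs \<and> s \<in> ascent_slots xs" if perm: "is_perm n xs"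
  proof -
    have "set ?ys \<subseteq> {..Suc n}"
      using perm by (auto simp: is_perm_def)
    moreover have "filter (\<lambda>x. x \<le> n) ?ys = xs"
      using perm by (auto simp: filter_insert_nth filter_id_conv is_perm_def)
    ultimately have "simsun (Suc n) ?ys \<longleftrightarrow> simsun n xs \<and> \<not> has_double_descent ?ys"
      by (simp add: simsun_Suc_iff)
    moreover have "\<not> has_double_descent ?ys \<longleftrightarrow> s \<in> ascent_slots xs" if "simsun n xs"
      using that perm s RS_D(4)[of xs n]
      by (intro not_has_double_descent_insert_nth_iff) (auto simp: RS_def is_perm_def)
    ultimately show ?thesis
      by blast
  qed
  ultimately show ?thesis
    by (auto simp: RS_def)
qed

lemma bij_betw_insert_nth_RS:
  "bij_betw (\<lambda>(xs, s). insert_nth s (Suc n) xs) (SIGMA xs:RS n. ascent_slots xs) (RS (Suc n))"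
proof (rule bij_betw_imageI)
  show "inj_on (\<lambda>(xs, s). insert_nth s (Suc n) xs) (SIGMA xs:RS n. ascent_slots xs)"
  proof (rule inj_onI, clarify)
    fix xs s xs' s'
    assume "xs \<in> RS n" "s \<in> ascent_slots xs" "xs' \<in> RS n" "s' \<in> ascent_slots xs'"
      and "insert_nth s (Suc n) xs = insert_nth s' (Suc n) xs'"
    then show "xs = xs' \<and> s = s'"
      by (intro insert_nth_inject) (auto simp: ascent_slots_def dest: RS_D(2))
  qed
  show "(\<lambda>(xs, s). insert_nth s (Suc n) xs) ` (SIGMA xs:RS n. ascent_slots xs) = RS (Suc n)"
  proof
    show "(\<lambda>(xs, s). insert_nth s (Suc n) xs) ` (SIGMA xs:RS n. ascent_slots xs) \<subseteq> RS (Suc n)"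
    proof clarify
      fix xs s
      assume "xs \<in> RS n" "s \<in> ascent_slots xs"
      then show "insert_nth s (Suc n) xs \<in> RS (Suc n)"
        using insert_nth_in_RS_Suc_iff[of s xs n] RS_D(2)[of xs n] by (auto simp: ascent_slots_def)
    qed
  next
    show "RS (Suc n) \<subseteq> (\<lambda>(xs, s). insert_nth s (Suc n) xs) ` (SIGMA xs:RS n. ascent_slots xs)"
    proof
      fix ys
      assume ys: "ys \<in> RS (Suc n)"
      have "Suc n \<in> set ys" "distinct ys"
        using RS_D(1,2)[OF ys] by auto
      then obtain xs s where "s \<le> length xs" "Suc n \<notin> set xs"
        and ys_eq: "ys = insert_nth s (Suc n) xs"
        by (rule in_set_imp_insert_nth)
      then have "xs \<in> RS n" "s \<in> ascent_slots xs"
        using ys insert_nth_in_RS_Suc_iff by auto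
      then show "ys \<in> (\<lambda>(xs, s). insert_nth s (Suc n) xs) ` (SIGMA xs:RS n. ascent_slots xs)"
        using ys_eq by force
    qed
  qed
qed

lemma sum_RS_Suc:
  "(\<Sum>ys\<in>RS (Suc n). f ys) = (\<Sum>xs\<in>RS n. \<Sum>s\<in>ascent_slots xs. f (insert_nth s (Suc n) xs))"
  by (simp add: sum.reindex_bij_betw[OF bij_betw_insert_nth_RS, symmetric] sum.Sigma
      prod.case_distrib)

lemma sum_RS_split_sign:
  assumes "2 \<le> n"
  shows "(\<Sum>xs\<in>RS n. f xs) = (\<Sum>xs\<in>RS_plus n. f xs) + (\<Sum>xs\<in>RS_minus n. f xs)"
proof -
  have "xs ! 0 \<noteq> xs ! 1" if "xs \<in> RS n" for xs
    using RS_D[OF that] assms by (simp add: nth_eq_iff_index_eq)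
  then have "RS n = RS_plus n \<union> RS_minus n"
    by (auto simp: RS_plus_def RS_minus_def neq_iff)
  moreover have "finite (RS_plus n)" "finite (RS_minus n)" "RS_plus n \<inter> RS_minus n = {}"
    by (auto simp: RS_plus_def RS_minus_def)
  ultimately show ?thesis
    by (simp only: sum.union_disjoint)
qed

lemma sum_sign_pk_children_plus:
  fixes k :: int
  assumes "xs \<in> RS_plus n" "2 \<le> n"
  shows "(\<Sum>s\<in>ascent_slots xs. of_bool (sign_pk (insert_nth s (Suc n) xs) = (b, k))) =
    of_bool (b \<and> int (pk xs) = k) * (k + 1) + of_bool (b \<and> int (pk xs) = k - 1) * (int n - 2 * k)
      + of_bool (\<not> b \<and> int (pk xs) = k - 1)"
proof -
  have xs: "distinct xs" "\<not> has_double_descent xs" "2 \<le> length xs" "\<forall>x\<in>set xs. x < Suc n"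
    and desc: "xs ! 1 < xs ! 0" and len: "length xs = n"
    using assms RS_D[of xs n] by (auto simp: RS_plus_def)
  define K where "K = insert (length xs) (Suc ` peaks xs)"
  define G where "G = new_peak_slots xs - {1}"
  have "1 \<in> new_peak_slots xs"
    using xs(3) desc by (auto simp: new_peak_slots_def peaks_def)
  then have slots: "ascent_slots xs = K \<union> G \<union> {1}"
    using ascent_slots_eq[OF xs(1-3)] desc by (auto simp: K_def G_def)
  have disj: "K \<inter> G = {}" "1 \<notin> K" "1 \<notin> G"
    using \<open>1 \<in> new_peak_slots xs\<close> by (auto simp: K_def G_def new_peak_slots_def)
  have fin: "finite K" "finite G"
    by (simp_all add: K_def G_def new_peak_slots_def)
  have shape: "\<forall>s\<in>K. sign_pk (insert_nth s (Suc n) xs) = (True, int (pk xs))"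
      "\<forall>s\<in>G. sign_pk (insert_nth s (Suc n) xs) = (True, int (pk xs) + 1)"
      "sign_pk (insert_nth 1 (Suc n) xs) = (False, int (pk xs) + 1)"
    using sign_pk_insert_nth[OF xs(3,4)] slots xs(3) desc \<open>1 \<in> new_peak_slots xs\<close> disj
    by (auto simp: K_def G_def new_peak_slots_def)
  have "card G = card (new_peak_slots xs) - 1" "0 < card (new_peak_slots xs)"
    using \<open>1 \<in> new_peak_slots xs\<close> by (auto simp: G_def card_gt_0_iff new_peak_slots_def)
  moreover have "xs \<noteq> []"
    using xs(3) by auto
  ultimately have card_G: "int (card G) = int (length xs) - 2 - 2 * int (pk xs)"
    using card_new_peak_slots[of xs] by linarith
  have "(\<Sum>s\<in>ascent_slots xs. of_bool (sign_pk (insert_nth s (Suc n) xs) = (b, k))) =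
      of_nat (card K) * of_bool ((True, int (pk xs)) = (b, k))
      + of_nat (card G) * of_bool ((True, int (pk xs) + 1) = (b, k))
      + (of_bool ((False, int (pk xs) + 1) = (b, k)) :: int)"
  proof -
    have "(\<Sum>s\<in>K \<union> G \<union> {1}. F s) = (\<Sum>s\<in>K. F s) + (\<Sum>s\<in>G. F s) + F 1" for F :: "nat \<Rightarrow> int"
      using disj fin by (simp add: sum.union_disjoint)
    then show ?thesis
      by (simp only: slots sum_of_bool_const_on[OF shape(1)] sum_of_bool_const_on[OF shape(2)]
          shape(3))
  qed
  then show ?thesis
    using card_G len by (cases b) (auto simp: K_def card_insert_length_Suc_peaks algebra_simps)
qed

lemma sum_sign_pk_children_minus:
  fixes k :: int
  assumes "xs \<in> RS_minus n" "2 \<le> n"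
  shows "(\<Sum>s\<in>ascent_slots xs. of_bool (sign_pk (insert_nth s (Suc n) xs) = (b, k))) =
    of_bool (b \<and> int (pk xs) = k) + of_bool (\<not> b \<and> int (pk xs) = k) * (k + 1)
      + of_bool (\<not> b \<and> int (pk xs) = k - 1) * (int n - 2 * k + 1)"
proof -
  have xs: "distinct xs" "\<not> has_double_descent xs" "2 \<le> length xs" "\<forall>x\<in>set xs. x < Suc n"
    and asc: "xs ! 0 < xs ! 1" and len: "length xs = n"
    using assms RS_D[of xs n] by (auto simp: RS_minus_def)
  define K where "K = insert (length xs) (Suc ` peaks xs)"
  define G where "G = new_peak_slots xs"
  have slots: "ascent_slots xs = {0} \<union> K \<union> G"
    using ascent_slots_eq[OF xs(1-3)] asc by (auto simp: K_def G_def)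
  have disj: "0 \<notin> K" "0 \<notin> G" "K \<inter> G = {}"
    using xs(3) by (auto simp: K_def G_def new_peak_slots_def)
  have fin: "finite K" "finite G"
    by (simp_all add: K_def G_def new_peak_slots_def)
  have shape: "sign_pk (insert_nth 0 (Suc n) xs) = (True, int (pk xs))"
      "\<forall>s\<in>K. sign_pk (insert_nth s (Suc n) xs) = (False, int (pk xs))"
      "\<forall>s\<in>G. sign_pk (insert_nth s (Suc n) xs) = (False, int (pk xs) + 1)"
    using sign_pk_insert_nth[OF xs(3,4)] slots xs(3) asc disj
    by (auto simp: K_def G_def new_peak_slots_def)
  have "(\<Sum>s\<in>ascent_slots xs. of_bool (sign_pk (insert_nth s (Suc n) xs) = (b, k))) =
      of_bool ((True, int (pk xs)) = (b, k))
      + of_nat (card K) * of_bool ((False, int (pk xs)) = (b, k))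
      + (of_nat (card G) * of_bool ((False, int (pk xs) + 1) = (b, k)) :: int)"
  proof -
    have "(\<Sum>s\<in>{0} \<union> K \<union> G. F s) = F 0 + (\<Sum>s\<in>K. F s) + (\<Sum>s\<in>G. F s)" for F :: "nat \<Rightarrow> int"
      using disj fin by (simp add: sum.union_disjoint)
    then show ?thesis
      by (simp only: slots shape(1) sum_of_bool_const_on[OF shape(2)]
          sum_of_bool_const_on[OF shape(3)])
  qed
  moreover have "xs \<noteq> []"
    using xs(3) by auto
  ultimately show ?thesis
    using card_new_peak_slots[of xs] len
    by (cases b) (auto simp: K_def G_def card_insert_length_Suc_peaks algebra_simps)
qed

lemma Pplus_eq_sum: "Pplus n k = (\<Sum>xs\<in>RS_plus n. of_bool (int (pk xs) = k))"
  by (simp add: Pplus_def sum_of_bool_eq RS_plus_def Int_def)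

lemma Pminus_eq_sum: "Pminus n k = (\<Sum>xs\<in>RS_minus n. of_bool (int (pk xs) = k))"
  by (simp add: Pminus_def sum_of_bool_eq RS_minus_def Int_def)

lemma sum_RS_sign_pk:
  assumes "2 \<le> n"
  shows "(\<Sum>xs\<in>RS n. of_bool (sign_pk xs = (b, k))) = (if b then Pplus n k else Pminus n k)"
  unfolding sum_RS_split_sign[OF assms]
  by (cases b)
    (auto simp: Pplus_eq_sum Pminus_eq_sum sign_pk_def RS_plus_def RS_minus_def intro!: sum.neutral)

lemma P_Suc_eq_sum_insert_nth:
  assumes "2 \<le> n"
  shows "(if b then Pplus (Suc n) k else Pminus (Suc n) k) =
    (\<Sum>xs\<in>RS_plus n. \<Sum>s\<in>ascent_slots xs. of_bool (sign_pk (insert_nth s (Suc n) xs) = (b, k)))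
    + (\<Sum>xs\<in>RS_minus n. \<Sum>s\<in>ascent_slots xs. of_bool (sign_pk (insert_nth s (Suc n) xs) = (b, k)))"
  by (simp only: sum_RS_sign_pk[OF le_SucI[OF assms], symmetric] sum_RS_Suc
      sum_RS_split_sign[OF assms])

lemma Pplus_Suc:
  assumes "2 \<le> n"
  shows "Pplus (Suc n) k = (k + 1) * Pplus n k + (int n - 2 * k) * Pplus n (k - 1) + Pminus n k"
proof -
  have "Pplus (Suc n) k =
      (\<Sum>xs\<in>RS_plus n.
          of_bool (int (pk xs) = k) * (k + 1) + of_bool (int (pk xs) = k - 1) * (int n - 2 * k))
      + (\<Sum>xs\<in>RS_minus n. of_bool (int (pk xs) = k))"
    using P_Suc_eq_sum_insert_nth[OF assms, of True k] assms
    by (simp add: sum_sign_pk_children_plus sum_sign_pk_children_minus del: sum_of_bool_eq)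
  then show ?thesis
    by (simp add: Pplus_eq_sum Pminus_eq_sum sum.distrib flip: sum_distrib_right)
qed

lemma Pminus_Suc:
  assumes "2 \<le> n"
  shows "Pminus (Suc n) k =
    (k + 1) * Pminus n k + (int n - 2 * k + 1) * Pminus n (k - 1) + Pplus n (k - 1)"
proof -
  have "Pminus (Suc n) k =
      (\<Sum>xs\<in>RS_plus n. of_bool (int (pk xs) = k - 1))
      + (\<Sum>xs\<in>RS_minus n.
          of_bool (int (pk xs) = k) * (k + 1) + of_bool (int (pk xs) = k - 1) * (int n - 2 * k + 1))"
    using P_Suc_eq_sum_insert_nth[OF assms, of False k] assms
    by (simp add: sum_sign_pk_children_plus sum_sign_pk_children_minus del: sum_of_bool_eq)
  then show ?thesis
    by (simp add: Pplus_eq_sum Pminus_eq_sum sum.distrib flip: sum_distrib_right)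
qed

lemma pk_neq_out_of_range:
  assumes "xs \<in> RS n" "k < 0 \<or> int n < k"
  shows "int (pk xs) \<noteq> k"
  using pk_le_length[of xs] RS_D(3)[OF assms(1)] assms(2) by linarith

lemma Pplus_eq_0: "k < 0 \<or> int n < k \<Longrightarrow> Pplus n k = 0"
  by (auto simp: Pplus_def RS_plus_def dest: pk_neq_out_of_range)

lemma Pminus_eq_0: "k < 0 \<or> int n < k \<Longrightarrow> Pminus n k = 0"
  by (auto simp: Pminus_def RS_minus_def dest: pk_neq_out_of_range)

lemma coeff_Pplus_poly: "coeff (Pplus_poly n) i = Pplus n (int i)"
  using Pplus_eq_0[of "int i" n] by (auto simp: Pplus_poly_def coeff_sum)

lemma coeff_Pminus_poly: "coeff (Pminus_poly n) i = Pminus n (int i)"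
  using Pminus_eq_0[of "int i" n] by (auto simp: Pminus_poly_def coeff_sum)

lemma coeff_linear_mult_plus_pderiv:
  fixes p :: "'a::idom poly"
  shows "coeff ([:1, a:] * p + [:0, 1, -2:] * pderiv p) i =
    of_nat (Suc i) * coeff p i + (if i = 0 then 0 else (a + 2 - 2 * of_nat i) * coeff p (i - 1))"
  by (cases i; cases "i - 1") (simp_all add: coeff_pderiv algebra_simps)

lemma Pplus_poly_Suc:
  assumes "2 \<le> n"
  shows "Pplus_poly (Suc n) =
    [:1, int n - 2:] * Pplus_poly n + [:0, 1, -2:] * pderiv (Pplus_poly n) + Pminus_poly n"
    (is "?p = ?q")
proof (rule poly_eqI)
  fix i
  \<comment> \<open>split off only the last summand, keeping the shape of
    coeff_linear_mult_plus_pderiv\<close>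
  show "coeff ?p i = coeff ?q i"
    unfolding coeff_add[of "_ + _"] coeff_linear_mult_plus_pderiv
    by (cases i)
      (simp_all add: coeff_Pplus_poly coeff_Pminus_poly Pplus_Suc[OF assms] Pplus_eq_0 algebra_simps)
qed

lemma Pminus_poly_Suc:
  assumes "2 \<le> n"
  shows "Pminus_poly (Suc n) =
    [:1, int n - 1:] * Pminus_poly n + [:0, 1, -2:] * pderiv (Pminus_poly n) + [:0, 1:] * Pplus_poly n"
    (is "?p = ?q")
proof (rule poly_eqI)
  fix i
  show "coeff ?p i = coeff ?q i"
    unfolding coeff_add[of "_ + _"] coeff_linear_mult_plus_pderiv
    by (cases i) (simp_all add: coeff_Pplus_poly coeff_Pminus_poly Pminus_Suc[OF assms]
        Pplus_eq_0 Pminus_eq_0 algebra_simps)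
qed

theorem lemma4:
  fixes n :: nat
  assumes "n \<ge> 2"
  shows "(\<forall>k::int.
            Pplus (n+1) k = (k+1) * Pplus n k + (int n - 2*k) * Pplus n (k-1) + Pminus n k \<and>
            Pminus (n+1) k = (k+1) * Pminus n k + (int n - 2*k + 1) * Pminus n (k-1) + Pplus n (k-1))
         \<and> Pplus_poly (n+1) = [:1, int n - 2:] * Pplus_poly n
              + [:0, 1, -2:] * pderiv (Pplus_poly n) + Pminus_poly n
         \<and> Pminus_poly (n+1) = [:1, int n - 1:] * Pminus_poly n
              + [:0, 1, -2:] * pderiv (Pminus_poly n) + [:0, 1:] * Pplus_poly n"
  using Pplus_Suc[OF assms] Pminus_Suc[OF assms] Pplus_poly_Suc[OF assms] Pminus_poly_Suc[OF assms]
  by simp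

end
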